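(* Fix $0<p<1$ and real numbers $L<U$ (not necessarily integers, and without requiring $U-L\ge 4$). With the notation of the context, for every real $x\in[L,U]$ there exist $\alpha(x),\beta(x)\in[0,1]$ with $\alpha(x)=\lim_{k\to\infty}\alpha_k(x)$ and $\beta(x)=\lim_{k\to\infty}\beta_k(x)$, and moreover $\alpha(x)+\beta(x)=1$.
   Context: Let $\xi_1,\xi_2,\dots$ be i.i.d. random variables with values in $\{1,-1\}$, $\mathbb{P}(\xi_i=1)=p$, $\mathbb{P}(\xi_i=-1)=q:=1-p$. Define $X_k=-1$ if $\xi_k=-1$; $X_k=2$ if $\xi_k=\xi_{k-1}=1$ (for $k\ge 2$); and $X_k=1$ otherwise (in particular $X_1=1$ when $\xi_1=1$). Let $S_0=0$, $S_k=X_1+\dots+X_k$, and $S^x_k=x+S_k$. For $k\ge 0$ let $\tau^x_k=\min\{l\in\{0,\dots,k\}: S^x_l\le L \text{ or } S^x_l\ge U\}$ if this set is nonempty, and $\tau^x_k=k$ otherwise. Let $\alpha_k(x)=\mathbb{P}\big(\bigcup_{l=0}^k\{\tau^x_k=l,\ S^x_l\le L\}\big)$ and $\beta_k(x)=\mathbb{P}\big(\bigcup_{l=0}^k\{\tau^x_k=l,\ S^x_l\ge U\}\big)$. *)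

theory Defs
  imports "HOL-Probability.Probability"
begin

text \<open>Increments: xi is the sequence of +-1 variables (indexed from 1),
  X k = -1 if xi k = -1; 2 if k >= 2 and xi k = xi (k-1) = 1; 1 otherwise.\<close>
definition incr :: "(nat \<Rightarrow> 'a \<Rightarrow> real) \<Rightarrow> nat \<Rightarrow> 'a \<Rightarrow> real" where
  "incr \<xi> k \<omega> =
     (if \<xi> k \<omega> = -1 then -1
      else if k \<ge> 2 \<and> \<xi> k \<omega> = 1 \<and> \<xi> (k - 1) \<omega> = 1 then 2
      else 1)"

definition walk :: "(nat \<Rightarrow> 'a \<Rightarrow> real) \<Rightarrow> real \<Rightarrow> nat \<Rightarrow> 'a \<Rightarrow> real" where
  "walk \<xi> x k \<omega> = x + (\<Sum>i\<in>{1..k}. incr \<xi> i \<omega>)"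

definition stop_time ::
  "real \<Rightarrow> real \<Rightarrow> (nat \<Rightarrow> 'a \<Rightarrow> real) \<Rightarrow> real \<Rightarrow> nat \<Rightarrow> 'a \<Rightarrow> nat" where
  "stop_time L U \<xi> x k \<omega> =
     (let A = {l\<in>{0..k}. walk \<xi> x l \<omega> \<le> L \<or> walk \<xi> x l \<omega> \<ge> U}
      in if A \<noteq> {} then Min A else k)"

definition alpha_k ::
  "'a measure \<Rightarrow> real \<Rightarrow> real \<Rightarrow> (nat \<Rightarrow> 'a \<Rightarrow> real) \<Rightarrow> nat \<Rightarrow> real \<Rightarrow> real" where
  "alpha_k M L U \<xi> k x = measure M
     (\<Union>l\<in>{0..k}. {\<omega>\<in>space M. stop_time L U \<xi> x k \<omega> = l \<and> walk \<xi> x l \<omega> \<le> L})"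

definition beta_k ::
  "'a measure \<Rightarrow> real \<Rightarrow> real \<Rightarrow> (nat \<Rightarrow> 'a \<Rightarrow> real) \<Rightarrow> nat \<Rightarrow> real \<Rightarrow> real" where
  "beta_k M L U \<xi> k x = measure M
     (\<Union>l\<in>{0..k}. {\<omega>\<in>space M. stop_time L U \<xi> x k \<omega> = l \<and> walk \<xi> x l \<omega> \<ge> U})"

end

theory Submission
  imports Defs
begin

(* alpha_k(x) and beta_k(x) are the probabilities that the walk has left (L, U) through the
   bottom, resp. the top, by time k. These events increase with k, so both limits exist by
   continuity of measure, and their sum is the probability that the walk ever leaves.
   A run of N > U - L consecutive down-steps forces an exit, and each of the disjoint blocks
   {iN+1, ..., iN+N} consists of down-steps only with probability q^N, independently of the
   others; hence the walk stays inside for all time with probability at most (1 - q^N)^m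
   for every m, i.e. with probability zero. *)

definition stays_between :: "real \<Rightarrow> real \<Rightarrow> (nat \<Rightarrow> real) \<Rightarrow> nat \<Rightarrow> bool" where
  "stays_between L U f n \<longleftrightarrow> (\<forall>j<n. L < f j \<and> f j < U)"

lemma exits_below_exits_above_disjoint:
  assumes "L < U"
    and "stays_between L U f l" "f l \<le> L"
    and "stays_between L U f l'" "U \<le> f l'"
  shows False
proof -
  have "l = l'"
    using assms unfolding stays_between_def by (metis linorder_neqE_nat not_less)
  then show False using assms by auto
qed

lemma exists_first_exit:
  "(\<exists>l. stays_between L U f l \<and> (f l \<le> L \<or> U \<le> f l)) \<longleftrightarrow> \<not> (\<forall>n. stays_between L U f n)"
proof
  assume "\<exists>l. stays_between L U f l \<and> (f l \<le> L \<or> U \<le> f l)"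
  then obtain l where "f l \<le> L \<or> U \<le> f l" by blast
  then show "\<not> (\<forall>n. stays_between L U f n)"
    unfolding stays_between_def by (metis lessI not_le)
next
  assume "\<not> (\<forall>n. stays_between L U f n)"
  then have "\<exists>l. f l \<le> L \<or> U \<le> f l"
    unfolding stays_between_def by (meson not_le)
  from exists_least_iff[THEN iffD1, OF this]
  show "\<exists>l. stays_between L U f l \<and> (f l \<le> L \<or> U \<le> f l)"
    unfolding stays_between_def by (meson not_le)
qed

lemma walk_add: "walk \<xi> x (a + n) \<omega> = walk \<xi> x a \<omega> + (\<Sum>j\<in>{a<..a + n}. incr \<xi> j \<omega>)"
proof -
  have "{1..a + n} = {1..a} \<union> {a<..a + n}" by auto
  then show ?thesis unfolding walk_def by (simp add: sum.union_disjoint ivl_disj_int)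
qed

lemma walk_down_run:
  assumes "\<forall>j\<in>{a<..a + n}. \<xi> j \<omega> = -1"
  shows "walk \<xi> x (a + n) \<omega> = walk \<xi> x a \<omega> - n"
proof -
  have "(\<Sum>j\<in>{a<..a + n}. incr \<xi> j \<omega>) = (\<Sum>j\<in>{a<..a + n}. -1)"
    using assms by (intro sum.cong) (auto simp: incr_def)
  then show ?thesis by (simp add: walk_add)
qed

lemma stop_time_eq_iff:
  assumes "l \<le> k" and "walk \<xi> x l \<omega> \<le> L \<or> U \<le> walk \<xi> x l \<omega>"
  shows "stop_time L U \<xi> x k \<omega> = l \<longleftrightarrow> stays_between L U (\<lambda>j. walk \<xi> x j \<omega>) l"
proof -
  let ?A = "{l\<in>{0..k}. walk \<xi> x l \<omega> \<le> L \<or> walk \<xi> x l \<omega> \<ge> U}"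
  have A: "l \<in> ?A" "finite ?A" using assms by auto
  then have "stop_time L U \<xi> x k \<omega> = Min ?A"
    unfolding stop_time_def Let_def by auto
  also have "\<dots> = l \<longleftrightarrow> (\<forall>a\<in>?A. l \<le> a)"
    using A by (subst Min_eq_iff) auto
  also have "\<dots> \<longleftrightarrow> (\<forall>j<l. \<not> (walk \<xi> x j \<omega> \<le> L \<or> U \<le> walk \<xi> x j \<omega>))"
  proof (intro iffI allI impI ballI)
    fix j assume "\<forall>a\<in>?A. l \<le> a" "j < l"
    then have "j \<notin> ?A" by (meson leD)
    moreover have "j \<le> k" using \<open>j < l\<close> \<open>l \<le> k\<close> by simp
    ultimately show "\<not> (walk \<xi> x j \<omega> \<le> L \<or> U \<le> walk \<xi> x j \<omega>)" by simp
  next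
    fix a assume "\<forall>j<l. \<not> (walk \<xi> x j \<omega> \<le> L \<or> U \<le> walk \<xi> x j \<omega>)" "a \<in> ?A"
    show "l \<le> a"
    proof (rule ccontr)
      assume "\<not> l \<le> a"
      then have "\<not> (walk \<xi> x a \<omega> \<le> L \<or> U \<le> walk \<xi> x a \<omega>)"
        using \<open>\<forall>j<l. _\<close> by (simp del: not_le)
      with \<open>a \<in> ?A\<close> show False by simp
    qed
  qed
  finally show ?thesis unfolding stays_between_def by (simp add: not_le)
qed

lemma stop_time_exit_iff:
  assumes "\<And>y. P y \<Longrightarrow> y \<le> L \<or> U \<le> y"
  shows "(\<exists>l\<in>{0..k}. stop_time L U \<xi> x k \<omega> = l \<and> P (walk \<xi> x l \<omega>)) \<longleftrightarrow>
    (\<exists>l\<le>k. stays_between L U (\<lambda>j. walk \<xi> x j \<omega>) l \<and> P (walk \<xi> x l \<omega>))"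
proof
  assume "\<exists>l\<in>{0..k}. stop_time L U \<xi> x k \<omega> = l \<and> P (walk \<xi> x l \<omega>)"
  then obtain l where l: "l \<le> k" "stop_time L U \<xi> x k \<omega> = l" "P (walk \<xi> x l \<omega>)" by auto
  then have "stays_between L U (\<lambda>j. walk \<xi> x j \<omega>) l"
    using stop_time_eq_iff[OF l(1) assms[OF l(3)]] l(2) by simp
  with l show "\<exists>l\<le>k. stays_between L U (\<lambda>j. walk \<xi> x j \<omega>) l \<and> P (walk \<xi> x l \<omega>)"
    by blast
next
  assume "\<exists>l\<le>k. stays_between L U (\<lambda>j. walk \<xi> x j \<omega>) l \<and> P (walk \<xi> x l \<omega>)"
  then obtain l where l: "l \<le> k" "stays_between L U (\<lambda>j. walk \<xi> x j \<omega>) l" "P (walk \<xi> x l \<omega>)"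
    by auto
  then have "stop_time L U \<xi> x k \<omega> = l"
    using stop_time_eq_iff[OF l(1) assms[OF l(3)]] l(2) by simp
  with l show "\<exists>l\<in>{0..k}. stop_time L U \<xi> x k \<omega> = l \<and> P (walk \<xi> x l \<omega>)"
    by auto
qed

lemma alpha_k_eq:
  "alpha_k M L U \<xi> k x = measure M
     {\<omega>\<in>space M. \<exists>l\<le>k. stays_between L U (\<lambda>j. walk \<xi> x j \<omega>) l \<and> walk \<xi> x l \<omega> \<le> L}"
proof -
  have "(\<exists>l\<in>{0..k}. stop_time L U \<xi> x k \<omega> = l \<and> walk \<xi> x l \<omega> \<le> L) \<longleftrightarrow>
      (\<exists>l\<le>k. stays_between L U (\<lambda>j. walk \<xi> x j \<omega>) l \<and> walk \<xi> x l \<omega> \<le> L)" for \<omega>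
    by (rule stop_time_exit_iff) simp
  then show ?thesis unfolding alpha_k_def by (intro arg_cong[where f = "measure M"]) blast
qed

lemma beta_k_eq:
  "beta_k M L U \<xi> k x = measure M
     {\<omega>\<in>space M. \<exists>l\<le>k. stays_between L U (\<lambda>j. walk \<xi> x j \<omega>) l \<and> U \<le> walk \<xi> x l \<omega>}"
proof -
  have "(\<exists>l\<in>{0..k}. stop_time L U \<xi> x k \<omega> = l \<and> U \<le> walk \<xi> x l \<omega>) \<longleftrightarrow>
      (\<exists>l\<le>k. stays_between L U (\<lambda>j. walk \<xi> x j \<omega>) l \<and> U \<le> walk \<xi> x l \<omega>)" for \<omega>
    by (rule stop_time_exit_iff) simp
  then show ?thesis unfolding beta_k_def by (intro arg_cong[where f = "measure M"]) blast
qed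

lemma walk_leaves_on_down_run:
  assumes "U - L < real n"
    and "\<forall>j\<in>{a<..a + n}. \<xi> j \<omega> = -1"
    and "stays_between L U (\<lambda>j. walk \<xi> x j \<omega>) (Suc a)"
  shows "\<not> stays_between L U (\<lambda>j. walk \<xi> x j \<omega>) (Suc (a + n))"
proof -
  have "walk \<xi> x a \<omega> < U"
    using assms(3) unfolding stays_between_def by simp
  then have "walk \<xi> x (a + n) \<omega> < L"
    using walk_down_run[of a n \<xi> \<omega> x] assms(1,2) by simp
  then show ?thesis
    unfolding stays_between_def by auto
qed

lemma disjoint_family_consecutive_blocks: "disjoint_family (\<lambda>i::nat. {i * N<..i * N + N})"
  unfolding disjoint_family_on_def
proof (intro ballI impI)
  fix i j :: nat assume "i \<noteq> j"
  have "i = j" if "t \<in> {i * N<..i * N + N}" "t \<in> {j * N<..j * N + N}" for t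
  proof -
    from that have "i * N < Suc j * N" "j * N < Suc i * N" by auto
    then show "i = j" by (simp only: mult_less_cancel2) linarith
  qed
  with \<open>i \<noteq> j\<close> show "{i * N<..i * N + N} \<inter> {j * N<..j * N + N} = {}" by blast
qed

lemma (in prob_space) tendsto_prob_exists_le:
  assumes [measurable]: "\<And>l. Measurable.pred M (Q l)"
  shows "(\<lambda>k. prob {\<omega>\<in>space M. \<exists>l\<le>k. Q l \<omega>}) \<longlonglongrightarrow> prob {\<omega>\<in>space M. \<exists>l. Q l \<omega>}"
proof -
  have "(\<lambda>k. prob {\<omega>\<in>space M. \<exists>l\<le>k. Q l \<omega>}) \<longlonglongrightarrow> prob (\<Union>k. {\<omega>\<in>space M. \<exists>l\<le>k. Q l \<omega>})"
    by (rule finite_Lim_measure_incseq) (auto simp: incseq_def intro: order_trans)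
  also have "(\<Union>k. {\<omega>\<in>space M. \<exists>l\<le>k. Q l \<omega>}) = {\<omega>\<in>space M. \<exists>l. Q l \<omega>}"
    by auto
  finally show ?thesis .
qed

locale independent_steps = prob_space M for M :: "'a measure" +
  fixes \<xi> :: "nat \<Rightarrow> 'a \<Rightarrow> real" and q :: real
  assumes indep: "indep_vars (\<lambda>_. borel) \<xi> {1..}"
    and prob_down: "\<And>i. 1 \<le> i \<Longrightarrow> prob {\<omega>\<in>space M. \<xi> i \<omega> = -1} = q"
    and q_pos: "0 < q"
begin

(* Nothing is assumed about the junk variable xi 0; incr reads it only behind the guard k >= 2. *)
lemma measurable_step_max [measurable]: "(\<lambda>\<omega>. \<xi> (max 1 i) \<omega>) \<in> borel_measurable M"
  using indep by (auto simp: indep_vars_def)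

lemma measurable_walk [measurable]: "walk \<xi> x n \<in> borel_measurable M"
proof -
  have "incr \<xi> j = incr (\<lambda>i. \<xi> (max 1 i)) j" if "1 \<le> j" for j
    using that by (auto simp: incr_def max_def fun_eq_iff)
  then have "walk \<xi> x n = walk (\<lambda>i. \<xi> (max 1 i)) x n"
    unfolding walk_def by (intro ext arg_cong[where f = "(+) x"] sum.cong) auto
  moreover have "walk (\<lambda>i. \<xi> (max 1 i)) x n \<in> borel_measurable M"
    unfolding walk_def incr_def by measurable
  ultimately show ?thesis by simp
qed

lemma sets_all_down:
  assumes "finite J" "J \<subseteq> {1..}"
  shows "{\<omega>\<in>space M. \<forall>j\<in>J. \<xi> j \<omega> = -1} \<in> events"
proof -
  have "{\<omega>\<in>space M. \<forall>j\<in>J. \<xi> j \<omega> = -1} = {\<omega>\<in>space M. \<forall>j\<in>J. \<xi> (max 1 j) \<omega> = -1}"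
    using assms(2) by (auto simp: max_def subset_eq)
  also have "\<dots> \<in> events"
    using assms(1) by measurable
  finally show ?thesis .
qed

lemma prob_all_down:
  assumes "finite J" "J \<subseteq> {1..}"
  shows "prob {\<omega>\<in>space M. \<forall>j\<in>J. \<xi> j \<omega> = -1} = q ^ card J"
proof (cases "J = {}")
  case True
  then show ?thesis by (simp add: prob_space)
next
  case False
  have "{\<omega>\<in>space M. \<forall>j\<in>J. \<xi> j \<omega> = -1} = (\<Inter>j\<in>J. \<xi> j -` {-1} \<inter> space M)"
    using False by auto
  also have "prob \<dots> = (\<Prod>j\<in>J. prob (\<xi> j -` {-1} \<inter> space M))"
    using False assms by (intro indep_varsD[OF indep]) auto
  also have "\<dots> = (\<Prod>j\<in>J. q)"
  proof (rule prod.cong[OF refl])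
    fix j assume "j \<in> J"
    have "\<xi> j -` {-1} \<inter> space M = {\<omega>\<in>space M. \<xi> j \<omega> = -1}" by auto
    then show "prob (\<xi> j -` {-1} \<inter> space M) = q"
      using prob_down \<open>j \<in> J\<close> assms(2) by auto
  qed
  finally show ?thesis by simp
qed

lemma prob_no_down_block:
  assumes "finite I" and "disjoint_family_on B I"
    and "\<And>i. i \<in> I \<Longrightarrow> finite (B i)" "\<And>i. i \<in> I \<Longrightarrow> B i \<subseteq> {1..}"
    and "\<And>i. i \<in> I \<Longrightarrow> card (B i) = n"
  shows "prob {\<omega>\<in>space M. \<forall>i\<in>I. \<not> (\<forall>j\<in>B i. \<xi> j \<omega> = -1)} = (1 - q ^ n) ^ card I"
proof (cases "I = {}")
  case True
  then show ?thesis by (simp add: prob_space)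
next
  case False
  let ?Y = "\<lambda>i \<omega>. restrict (\<lambda>j. \<xi> j \<omega>) (B i)"
  let ?D = "\<lambda>i. {f\<in>space (Pi\<^sub>M (B i) (\<lambda>_. borel)). \<not> (\<forall>j\<in>B i. f j = (-1::real))}"
  have indep_blocks: "indep_vars (\<lambda>i. Pi\<^sub>M (B i) (\<lambda>_. borel)) ?Y I"
    using assms by (intro indep_vars_restrict[OF indep]) auto
  have block_event: "?Y i -` ?D i \<inter> space M = space M - {\<omega>\<in>space M. \<forall>j\<in>B i. \<xi> j \<omega> = -1}" for i
    by (auto simp: space_PiM)
  have "{\<omega>\<in>space M. \<forall>i\<in>I. \<not> (\<forall>j\<in>B i. \<xi> j \<omega> = -1)} = (\<Inter>i\<in>I. ?Y i -` ?D i \<inter> space M)"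
    using False unfolding block_event by auto
  also have "prob \<dots> = (\<Prod>i\<in>I. prob (?Y i -` ?D i \<inter> space M))"
    using False assms by (intro indep_varsD[OF indep_blocks]) auto
  also have "\<dots> = (\<Prod>i\<in>I. 1 - q ^ n)"
    unfolding block_event using assms by (intro prod.cong) (auto simp: prob_compl sets_all_down prob_all_down)
  finally show ?thesis by simp
qed

lemma prob_never_exits: "prob {\<omega>\<in>space M. \<forall>n. stays_between L U (\<lambda>j. walk \<xi> x j \<omega>) n} = 0"
proof -
  let ?Never = "{\<omega>\<in>space M. \<forall>n. stays_between L U (\<lambda>j. walk \<xi> x j \<omega>) n}"
  define N where "N = nat \<lceil>U - L\<rceil> + 1"
  have "U - L < real N" unfolding N_def by linarith
  define B where "B i = {i * N<..i * N + N}" for i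
  have B: "finite (B i)" "B i \<subseteq> {1..}" "card (B i) = N" for i
    unfolding B_def by auto
  have "disjoint_family B"
    unfolding B_def by (rule disjoint_family_consecutive_blocks)
  have never_sub: "?Never \<subseteq> {\<omega>\<in>space M. \<forall>i\<in>{..<m}. \<not> (\<forall>j\<in>B i. \<xi> j \<omega> = -1)}" for m
  proof (intro subsetI CollectI conjI ballI notI)
    fix \<omega> i assume \<omega>: "\<omega> \<in> ?Never" and "i \<in> {..<m}" "\<forall>j\<in>B i. \<xi> j \<omega> = -1"
    then have "\<not> stays_between L U (\<lambda>j. walk \<xi> x j \<omega>) (Suc (i * N + N))"
      by (intro walk_leaves_on_down_run \<open>U - L < real N\<close>) (auto simp: B_def)
    with \<omega> show False by blast
  qed (simp)
  have "prob ?Never \<le> (1 - q ^ N) ^ m" for m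
  proof -
    have "prob ?Never \<le> prob {\<omega>\<in>space M. \<forall>i\<in>{..<m}. \<not> (\<forall>j\<in>B i. \<xi> j \<omega> = -1)}"
    proof (rule finite_measure_mono[OF never_sub], rule sets.sets_Collect_countable_Ball)
      show "{\<omega>\<in>space M. \<not> (\<forall>j\<in>B i. \<xi> j \<omega> = -1)} \<in> events" for i
        by (intro sets.sets_Collect_neg sets_all_down B)
    qed
    also have "\<dots> = (1 - q ^ N) ^ card {..<m}"
      using B disjoint_family_on_mono[OF subset_UNIV \<open>disjoint_family B\<close>]
      by (intro prob_no_down_block) auto
    finally show ?thesis by simp
  qed
  moreover have "(\<lambda>m. (1 - q ^ N) ^ m) \<longlonglongrightarrow> 0"
  proof (rule LIMSEQ_power_zero)
    have "q \<le> 1" using prob_down[of 1] by auto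
    then show "norm (1 - q ^ N) < 1"
      using q_pos by (simp add: power_le_one)
  qed
  ultimately have "prob ?Never \<le> 0"
    by (intro LIMSEQ_le_const[where X = "\<lambda>m. (1 - q ^ N) ^ m"]) auto
  then show ?thesis by (simp add: measure_le_0_iff)
qed

lemma exit_probabilities_tendsto:
  assumes "L < U"
  shows "\<exists>a b. a \<in> {0..1} \<and> b \<in> {0..1}
    \<and> (\<lambda>k. alpha_k M L U \<xi> k x) \<longlonglongrightarrow> a \<and> (\<lambda>k. beta_k M L U \<xi> k x) \<longlonglongrightarrow> b \<and> a + b = 1"
proof -
  define Below where
    "Below = {\<omega>\<in>space M. \<exists>l. stays_between L U (\<lambda>j. walk \<xi> x j \<omega>) l \<and> walk \<xi> x l \<omega> \<le> L}"
  define Above where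
    "Above = {\<omega>\<in>space M. \<exists>l. stays_between L U (\<lambda>j. walk \<xi> x j \<omega>) l \<and> U \<le> walk \<xi> x l \<omega>}"
  define Never where
    "Never = {\<omega>\<in>space M. \<forall>n. stays_between L U (\<lambda>j. walk \<xi> x j \<omega>) n}"
  have events: "Below \<in> events" "Above \<in> events" "Never \<in> events"
    unfolding Below_def Above_def Never_def stays_between_def by measurable
  have "(\<lambda>k. alpha_k M L U \<xi> k x) \<longlonglongrightarrow> prob Below"
    unfolding alpha_k_eq Below_def by (rule tendsto_prob_exists_le) (simp add: stays_between_def)
  moreover have "(\<lambda>k. beta_k M L U \<xi> k x) \<longlonglongrightarrow> prob Above"
    unfolding beta_k_eq Above_def by (rule tendsto_prob_exists_le) (simp add: stays_between_def)
  moreover have "Below \<inter> Above = {}"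
    using exits_below_exits_above_disjoint[OF assms] unfolding Below_def Above_def by blast
  moreover have "Below \<union> Above = space M - Never"
  proof -
    have "\<omega> \<in> Below \<union> Above \<longleftrightarrow> \<omega> \<in> space M - Never" for \<omega>
      using exists_first_exit[of L U "\<lambda>j. walk \<xi> x j \<omega>"]
      unfolding Below_def Above_def Never_def by auto
    then show ?thesis by blast
  qed
  then have "prob Below + prob Above = 1"
    using events \<open>Below \<inter> Above = {}\<close> prob_never_exits
    by (simp add: finite_measure_Union[symmetric] prob_compl Never_def)
  ultimately show ?thesis
    by (intro exI[of _ "prob Below"] exI[of _ "prob Above"]) auto
qed

end

theorem corollary2p5:
  fixes M :: "'a measure" and \<xi> :: "nat \<Rightarrow> 'a \<Rightarrow> real" and p L U :: real
  assumes "prob_space M"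
    and "0 < p" and "p < 1"
    and "L < U"
    and "prob_space.indep_vars M (\<lambda>_. borel) \<xi> {1..}"
    and "\<And>i \<omega>. i \<ge> 1 \<Longrightarrow> \<omega> \<in> space M \<Longrightarrow> \<xi> i \<omega> \<in> {1, -1}"
    and "\<And>i. i \<ge> 1 \<Longrightarrow> measure M {\<omega>\<in>space M. \<xi> i \<omega> = 1} = p"
    and "\<And>i. i \<ge> 1 \<Longrightarrow> measure M {\<omega>\<in>space M. \<xi> i \<omega> = -1} = 1 - p"
  shows "\<forall>x\<in>{L..U}. \<exists>a b. a \<in> {0..1} \<and> b \<in> {0..1}
           \<and> (\<lambda>k. alpha_k M L U \<xi> k x) \<longlonglongrightarrow> a
           \<and> (\<lambda>k. beta_k M L U \<xi> k x) \<longlonglongrightarrow> b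
           \<and> a + b = 1"
proof -
  interpret prob_space M by fact
  interpret independent_steps M \<xi> "1 - p"
    using assms by unfold_locales auto
  show ?thesis
    using exit_probabilities_tendsto[OF \<open>L < U\<close>] by blast
qed

end
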